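(* Let $n\ge1$ and let $X$ be a vector field on $(\mathbf{R}^3)^n$ such that each component $X_j$, $j=1,\ldots,n$, is a (real) linear combination of cross products $p_i\times p_k$ of the variables $p_1,\ldots,p_n\in\mathbf{R}^3$. Let $Y=\nabla f^X$. Then $\nabla f^Y=3Y$.
   Context: For a vector field $Z$ on $(\mathbf{R}^3)^n$ with components $Z_1,\ldots,Z_n$, $f^Z$ denotes the real-valued function $f^Z(p)=Z_p\cdot p=\sum_{i=1}^n Z_i(p)\cdot p_i$ for $p=(p_1,\ldots,p_n)$; $\nabla$ is the Euclidean gradient on $(\mathbf{R}^3)^n=\mathbf{R}^{3n}$. *)

theory Defs
  imports "HOL-Analysis.Analysis"
begin

text \<open>Points of (R^3)^n are elements of real^3^'n, the index type 'n having n elements.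
  For a vector field Z on (R^3)^n, fZ Z p = sum_i Z_i(p) . p_i.\<close>

definition fZ :: "(real^3^'n::finite \<Rightarrow> real^3^'n) \<Rightarrow> real^3^'n \<Rightarrow> real" where
  "fZ Z p = (\<Sum>i\<in>UNIV. (Z p $ i) \<bullet> (p $ i))"

end

theory Submission
  imports Defs
begin

text \<open>Each component of X is a quadratic form in p, so f^X is homogeneous of degree 3. Euler's
  identity then gives p \<bullet> Y p = 3 f^X(p), and f^Y(p) = p \<bullet> Y p; hence f^Y = 3 f^X, whose
  gradient is 3Y.\<close>

lemma fZ_eq_inner: "fZ Z p = p \<bullet> Z p"
  by (simp add: fZ_def inner_vec_def inner_commute mult.commute)

lemma fZ_homogeneous:
  assumes "\<And>t. Z (t *\<^sub>R p) = t ^ k *\<^sub>R Z p"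
  shows "fZ Z (t *\<^sub>R p) = t ^ Suc k * fZ Z p"
  by (simp add: fZ_eq_inner assms mult_ac)

lemma cross3_quadratic_field_homogeneous:
  fixes c :: "'n::finite \<Rightarrow> 'n \<Rightarrow> 'n \<Rightarrow> real"
  assumes "\<And>p. X p = (\<chi> j. \<Sum>i\<in>UNIV. \<Sum>k\<in>UNIV. c j i k *\<^sub>R cross3 (p $ i) (p $ k))"
  shows "X (t *\<^sub>R p) = t ^ 2 *\<^sub>R X p"
  unfolding assms
  by (simp add: vec_eq_iff cross_mult_left cross_mult_right scaleR_sum_right
      power2_eq_square mult_ac)

lemma gderiv_inner_homogeneous:
  fixes f :: "'a::real_inner \<Rightarrow> real"
  assumes hom: "\<And>t. f (t *\<^sub>R x) = t ^ k * f x"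
    and grad: "GDERIV f x :> g"
  shows "x \<bullet> g = real k * f x"
proof -
  have scale: "((\<lambda>t::real. t *\<^sub>R x) has_derivative (\<lambda>t. t *\<^sub>R x)) (at 1)"
    by (auto intro!: derivative_eq_intros)
  have "((\<lambda>t. f (t *\<^sub>R x)) has_derivative (\<lambda>t. (t *\<^sub>R x) \<bullet> g)) (at 1)"
    using has_derivative_compose[OF scale, of f "\<lambda>h. h \<bullet> g"] grad[unfolded gderiv_def]
    by (simp add: o_def)
  then have chain: "((\<lambda>t. f (t *\<^sub>R x)) has_real_derivative x \<bullet> g) (at 1)"
    by (simp add: has_field_derivative_def mult.commute[of _ "x \<bullet> g"])
  have power: "((\<lambda>t. f (t *\<^sub>R x)) has_real_derivative real k * f x) (at 1)"
    unfolding hom by (auto intro!: derivative_eq_intros)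
  show ?thesis
    using DERIV_unique[OF chain power] .
qed

theorem proposition4p4:
  fixes c :: "'n::finite \<Rightarrow> 'n \<Rightarrow> 'n \<Rightarrow> real"
    and X Y :: "real^3^'n \<Rightarrow> real^3^'n"
  assumes X_def: "\<And>p. X p = (\<chi> j. \<Sum>i\<in>UNIV. \<Sum>k\<in>UNIV. c j i k *\<^sub>R cross3 (p $ i) (p $ k))"
    and Y_grad: "\<And>p. GDERIV (fZ X) p :> Y p"
  shows "\<forall>p. GDERIV (fZ Y) p :> (3::real) *\<^sub>R Y p"
proof
  fix p
  have "fZ X (t *\<^sub>R q) = t ^ 3 * fZ X q" for t q
    using fZ_homogeneous[OF cross3_quadratic_field_homogeneous[OF X_def]]
    by (simp add: numeral_3_eq_3)
  then have "fZ Y q = 3 * fZ X q" for q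
    using gderiv_inner_homogeneous[of "fZ X" q 3, OF _ Y_grad] by (simp add: fZ_eq_inner)
  then have "fZ Y = (\<lambda>q. 3 * fZ X q)"
    by auto
  moreover have "DERIV (\<lambda>s. 3 * s) (fZ X p) :> 3"
    by (auto intro!: derivative_eq_intros)
  ultimately show "GDERIV (fZ Y) p :> (3::real) *\<^sub>R Y p"
    using GDERIV_DERIV_compose[OF Y_grad] by simp
qed

end
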